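(* Let $G$ be a graph whose $\operatorname{IR}$-graph $H=G(\operatorname{IR})$ is connected, and let $X$ be an $\operatorname{IR}(G)$-set such that either (i) the induced subgraph $G[X]$ has exactly one edge, or (ii) $X$ is independent and at least two vertices of $X$ have $X$-external private neighbours. Then $X$ lies on an induced $4$-cycle of $H$.
   Context: All graphs are finite and simple. For $G=(V,E)$, $D\subseteq V$, $v\in D$: $\operatorname{PN}(v,D)=N[v]-N[D-\{v\}]$ and $\operatorname{EPN}(v,D)=\operatorname{PN}(v,D)-D$; elements of $\operatorname{EPN}(v,D)$ are the $D$-external private neighbours of $v$. $D$ is irredundant if $\operatorname{PN}(v,D)\neq\varnothing$ for all $v\in D$; $\operatorname{IR}(G)$ is the maximum size of an irredundant set; an $\operatorname{IR}(G)$-set is an irredundant set of that size. $G(\operatorname{IR})$ has the $\operatorname{IR}(G)$-sets as vertices, with $D\sim D'$ iff there exist $u\in D$, $v\in D'$ with $uv\in E(G)$ and $D'=(D-\{u\})\cup\{v\}$. *)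

theory Defs
  imports Main
begin

definition simple_graph :: "'a set \<Rightarrow> ('a \<Rightarrow> 'a \<Rightarrow> bool) \<Rightarrow> bool" where
  "simple_graph V E \<longleftrightarrow> finite V \<and> (\<forall>u v. E u v \<longrightarrow> u \<in> V \<and> v \<in> V)
     \<and> (\<forall>u v. E u v \<longrightarrow> E v u) \<and> (\<forall>v. \<not> E v v)"

definition cnbhd :: "'a set \<Rightarrow> ('a \<Rightarrow> 'a \<Rightarrow> bool) \<Rightarrow> 'a \<Rightarrow> 'a set" where
  "cnbhd V E v = insert v {u \<in> V. E v u}"

definition cnbhd_set :: "'a set \<Rightarrow> ('a \<Rightarrow> 'a \<Rightarrow> bool) \<Rightarrow> 'a set \<Rightarrow> 'a set" where
  "cnbhd_set V E S = (\<Union>v\<in>S. cnbhd V E v)"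

definition PN :: "'a set \<Rightarrow> ('a \<Rightarrow> 'a \<Rightarrow> bool) \<Rightarrow> 'a \<Rightarrow> 'a set \<Rightarrow> 'a set" where
  "PN V E v D = cnbhd V E v - cnbhd_set V E (D - {v})"

definition EPN :: "'a set \<Rightarrow> ('a \<Rightarrow> 'a \<Rightarrow> bool) \<Rightarrow> 'a \<Rightarrow> 'a set \<Rightarrow> 'a set" where
  "EPN V E v D = PN V E v D - D"

definition irredundant :: "'a set \<Rightarrow> ('a \<Rightarrow> 'a \<Rightarrow> bool) \<Rightarrow> 'a set \<Rightarrow> bool" where
  "irredundant V E D \<longleftrightarrow> D \<subseteq> V \<and> (\<forall>v\<in>D. PN V E v D \<noteq> {})"

definition IR :: "'a set \<Rightarrow> ('a \<Rightarrow> 'a \<Rightarrow> bool) \<Rightarrow> nat" where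
  "IR V E = Max (card ` {D. irredundant V E D})"

definition IR_set :: "'a set \<Rightarrow> ('a \<Rightarrow> 'a \<Rightarrow> bool) \<Rightarrow> 'a set \<Rightarrow> bool" where
  "IR_set V E D \<longleftrightarrow> irredundant V E D \<and> card D = IR V E"

definition IR_adj :: "'a set \<Rightarrow> ('a \<Rightarrow> 'a \<Rightarrow> bool) \<Rightarrow> 'a set \<Rightarrow> 'a set \<Rightarrow> bool" where
  "IR_adj V E D D' \<longleftrightarrow> IR_set V E D \<and> IR_set V E D' \<and>
     (\<exists>u\<in>D. \<exists>v\<in>D'. E u v \<and> D' = (D - {u}) \<union> {v})"

definition IR_graph_connected :: "'a set \<Rightarrow> ('a \<Rightarrow> 'a \<Rightarrow> bool) \<Rightarrow> bool" where
  "IR_graph_connected V E \<longleftrightarrow>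
     (\<forall>D D'. IR_set V E D \<longrightarrow> IR_set V E D' \<longrightarrow> (IR_adj V E)\<^sup>*\<^sup>* D D')"

definition on_induced_C4_IR :: "'a set \<Rightarrow> ('a \<Rightarrow> 'a \<Rightarrow> bool) \<Rightarrow> 'a set \<Rightarrow> bool" where
  "on_induced_C4_IR V E X \<longleftrightarrow> (\<exists>A B C. distinct [X, A, B, C] \<and>
     IR_adj V E X A \<and> IR_adj V E A B \<and> IR_adj V E B C \<and> IR_adj V E C X \<and>
     \<not> IR_adj V E X B \<and> \<not> IR_adj V E A C)"

definition induced_edges :: "('a \<Rightarrow> 'a \<Rightarrow> bool) \<Rightarrow> 'a set \<Rightarrow> 'a set set" where
  "induced_edges E X = {{u, v} | u v. u \<in> X \<and> v \<in> X \<and> E u v}"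

definition independent :: "('a \<Rightarrow> 'a \<Rightarrow> bool) \<Rightarrow> 'a set \<Rightarrow> bool" where
  "independent E X \<longleftrightarrow> (\<forall>u\<in>X. \<forall>v\<in>X. \<not> E u v)"

end

theory Submission
  imports Defs
begin

text \<open>Let \<open>u, v \<in> X\<close> carry X-external private neighbours \<open>u'\<close>, \<open>v'\<close>, and suppose the only
  edge of \<open>G[X]\<close> (if any) is \<open>uv\<close>. With \<open>R = X - {u, v}\<close>, the four sets \<open>R \<union> {a, b}\<close> for
  \<open>a \<in> {u, u'}\<close>, \<open>b \<in> {v, v'}\<close> are all IR-sets: the vertices of \<open>R\<close> are their own private
  neighbours, and a primed vertex keeps its old partner, or itself, as private neighbour.
  Exchanging \<open>u \<leftrightarrow> u'\<close> and \<open>v \<leftrightarrow> v'\<close> in turn walks around the 4-cycle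
  \<open>X = R \<union> {u, v}, R \<union> {u', v}, R \<union> {u', v'}, R \<union> {u, v'}\<close>, whose diagonals differ in two
  vertices and hence are not edges of \<open>G(IR)\<close>.\<close>

lemma simple_graph_sym: "simple_graph V E \<Longrightarrow> E u v \<Longrightarrow> E v u"
  unfolding simple_graph_def by blast

lemma simple_graph_vertices: "simple_graph V E \<Longrightarrow> E u v \<Longrightarrow> u \<in> V \<and> v \<in> V"
  unfolding simple_graph_def by blast

lemma mem_PN_iff:
  "p \<in> PN V E w S \<longleftrightarrow>
     (p = w \<or> p \<in> V \<and> E w p) \<and> (\<forall>z\<in>S. z \<noteq> w \<longrightarrow> p \<noteq> z \<and> \<not> (p \<in> V \<and> E z p))"
  unfolding PN_def cnbhd_set_def cnbhd_def by blast

lemma mem_EPN_iff: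
  assumes "simple_graph V E" and "u \<in> X"
  shows "p \<in> EPN V E u X \<longleftrightarrow> p \<notin> X \<and> E u p \<and> (\<forall>z\<in>X. z \<noteq> u \<longrightarrow> \<not> E z p)"
  using assms simple_graph_vertices[OF assms(1)]
  unfolding EPN_def Diff_iff mem_PN_iff by auto

lemma EPN_eq_PN_if_adjacent:
  assumes G: "simple_graph V E" and "x \<in> X" and "y \<in> X" and "E x y"
  shows "EPN V E x X = PN V E x X"
proof -
  have "p \<notin> X" if p: "p \<in> PN V E x X" for p
  proof
    assume "p \<in> X"
    have "x \<noteq> y" "x \<in> V" "E y x"
      using G \<open>E x y\<close> unfolding simple_graph_def by metis+
    then show False
      using p \<open>p \<in> X\<close> \<open>y \<in> X\<close> unfolding mem_PN_iff by metis
  qed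
  then show ?thesis unfolding EPN_def by blast
qed

lemma EPN_nonempty_if_adjacent:
  assumes "simple_graph V E" and "irredundant V E X" and "x \<in> X" and "y \<in> X" and "E x y"
  shows "EPN V E x X \<noteq> {}"
  using assms EPN_eq_PN_if_adjacent[of V E x X y] unfolding irredundant_def by simp

lemma IR_adjI:
  assumes "IR_set V E D" and "IR_set V E D'" and "x \<in> D" and "E x y"
    and "D' = insert y (D - {x})"
  shows "IR_adj V E D D'"
  unfolding IR_adj_def using assms by blast

lemma IR_adj_new_vertex_unique:
  assumes "IR_adj V E D D'" and "x \<in> D' - D" and "y \<in> D' - D"
  shows "x = y"
  using assms unfolding IR_adj_def by blast

locale private_neighbour_swap =
  fixes V :: "'a set" and E :: "'a \<Rightarrow> 'a \<Rightarrow> bool" and X :: "'a set" and u v u' v' :: 'a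
  assumes graph: "simple_graph V E"
    and IR_set_X: "IR_set V E X"
    and u_in: "u \<in> X" and v_in: "v \<in> X" and u_neq_v: "u \<noteq> v"
    and u'_EPN: "u' \<in> EPN V E u X" and v'_EPN: "v' \<in> EPN V E v X"
    and edges_within: "\<And>w z. w \<in> X \<Longrightarrow> z \<in> X \<Longrightarrow> E w z \<Longrightarrow> {w, z} = {u, v}"
begin

lemma swap_roles: "private_neighbour_swap V E X v u v' u'"
  unfolding private_neighbour_swap_def
proof (intro conjI allI impI)
  show "{w, z} = {v, u}" if "w \<in> X" "z \<in> X" "E w z" for w z
    using edges_within[OF that] by (metis insert_commute)
qed (fact graph IR_set_X v_in u_in v'_EPN u'_EPN | use u_neq_v in blast)+

lemma E_commute: "E x y \<longleftrightarrow> E y x"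
  using simple_graph_sym[OF graph] by blast

lemma u'_notin: "u' \<notin> X" and E_u_u': "E u u'"
  and u'_private: "\<And>z. z \<in> X \<Longrightarrow> z \<noteq> u \<Longrightarrow> \<not> E z u'"
  using u'_EPN mem_EPN_iff[OF graph u_in] by auto

lemma v'_notin: "v' \<notin> X" and v'_private: "\<And>z. z \<in> X \<Longrightarrow> z \<noteq> v \<Longrightarrow> \<not> E z v'"
  using private_neighbour_swap.u'_notin[OF swap_roles] private_neighbour_swap.u'_private[OF swap_roles]
  by blast+

lemma u'_neq_v': "u' \<noteq> v'"
  using E_u_u' v'_private u_in u_neq_v by blast

lemma rest_not_adjacent:
  assumes "w \<in> X - {u, v}" and "z \<in> X"
  shows "\<not> E z w"
proof
  assume "E z w"
  then have "{z, w} = {u, v}" using assms edges_within by blast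
  then have "w \<in> {u, v}" by blast
  then show False using assms(1) by blast
qed

lemma rest_mem_own_PN:
  assumes w: "w \<in> X - {u, v}" and "a \<in> {u, u'}" and "b \<in> {v, v'}"
  shows "w \<in> PN V E w (insert a (insert b (X - {u, v})))"
proof -
  have "\<not> E z w" if z: "z \<in> insert a (insert b (X - {u, v}))" for z
  proof -
    consider "z \<in> X" | "z = u'" | "z = v'" using z assms u_in v_in by auto
    then show ?thesis
    proof cases
      case 1
      then show ?thesis using rest_not_adjacent[OF w] by blast
    next
      case 2
      then show ?thesis using u'_private[of w] w E_commute by blast
    next
      case 3
      then show ?thesis using v'_private[of w] w E_commute by blast
    qed
  qed
  then show ?thesis unfolding mem_PN_iff by blast
qed

text \<open>Unless \<open>b = v\<close>, the vertex \<open>u\<close> is a private neighbour of \<open>a\<close>; if \<open>b = v\<close> then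
  \<open>a = u'\<close>, which is its own private neighbour.\<close>
lemma PN_exchanged_nonempty:
  assumes a: "a \<in> {u, u'}" and b: "b \<in> {v, v'}" and ab: "(a, b) \<noteq> (u, v)"
  shows "PN V E a (insert a (insert b (X - {u, v}))) \<noteq> {}"
proof (cases "b = v")
  case True
  with a ab have "a = u'" by blast
  then have "u' \<in> PN V E a (insert a (insert b (X - {u, v})))"
    using True u'_notin u'_private v_in u_neq_v unfolding mem_PN_iff by auto
  then show ?thesis by blast
next
  case False
  with b have b: "b = v'" by blast
  have "u \<in> V"
    using u_in IR_set_X unfolding IR_set_def irredundant_def by blast
  moreover have "u = a \<or> E a u"
    using a E_u_u' E_commute by blast
  moreover have "u \<noteq> z \<and> \<not> E z u" if "z \<in> insert b (X - {u, v})" for z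
    using that b u_in u_neq_v v'_notin v'_private[of u] rest_not_adjacent[of z u] E_commute by blast
  ultimately have "u \<in> PN V E a (insert a (insert b (X - {u, v})))"
    unfolding mem_PN_iff by blast
  then show ?thesis by blast
qed

lemma IR_set_swapped:
  assumes a: "a \<in> {u, u'}" and b: "b \<in> {v, v'}"
  shows "IR_set V E (insert a (insert b (X - {u, v})))" (is "IR_set V E ?S")
proof (cases "(a, b) = (u, v)")
  case True
  then have "?S = X" using u_in v_in by auto
  then show ?thesis using IR_set_X by simp
next
  case False
  have X_sub: "X \<subseteq> V" and fin: "finite X"
    using IR_set_X graph unfolding IR_set_def irredundant_def simple_graph_def
    by (auto intro: finite_subset)
  have new: "a \<notin> X - {u, v}" "b \<notin> X - {u, v}" "a \<noteq> b"
    using a b u'_notin v'_notin u_neq_v u_in v_in u'_neq_v' by auto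
  have "?S \<subseteq> V"
    using a b X_sub E_u_u' simple_graph_vertices[OF graph] v'_EPN
      unfolding mem_EPN_iff[OF graph v_in] by blast
  moreover have "PN V E w ?S \<noteq> {}" if "w \<in> ?S" for w
  proof -
    have "PN V E b (insert b (insert a (X - {v, u}))) \<noteq> {}"
      using private_neighbour_swap.PN_exchanged_nonempty[OF swap_roles, of b a] a b False by auto
    then show ?thesis
      using that rest_mem_own_PN[OF _ a b] PN_exchanged_nonempty[OF a b False]
      by (auto simp: insert_commute)
  qed
  moreover have "card (X - {u, v}) + 2 = card X"
    using card_Diff_subset[of "{u, v}" X] card_mono[of X "{u, v}"] fin u_in v_in u_neq_v
    by auto
  then have "card ?S = card X"
    using new fin by simp
  ultimately show ?thesis
    using IR_set_X unfolding IR_set_def irredundant_def by simp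
qed

lemma on_induced_C4_IR: "on_induced_C4_IR V E X"
proof -
  let ?R = "X - {u, v}"
  define A where "A = insert u' (insert v ?R)"
  define B where "B = insert u' (insert v' ?R)"
  define C where "C = insert u (insert v' ?R)"
  have IR_sets: "IR_set V E A" "IR_set V E B" "IR_set V E C"
    unfolding A_def B_def C_def by (auto intro: IR_set_swapped)
  have "IR_adj V E X A"
    by (rule IR_adjI[OF IR_set_X IR_sets(1) u_in E_u_u']) (use v_in u_neq_v in \<open>auto simp: A_def\<close>)
  moreover have "IR_adj V E A B"
    using v_in u_neq_v u'_notin v'_EPN unfolding mem_EPN_iff[OF graph v_in]
    by (intro IR_adjI[OF IR_sets(1,2), of v]) (auto simp: A_def B_def)
  moreover have "IR_adj V E B C"
    using u_in u_neq_v u'_neq_v' u'_notin v'_notin simple_graph_sym[OF graph E_u_u']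
    by (intro IR_adjI[OF IR_sets(2,3), of u']) (auto simp: B_def C_def)
  moreover have "IR_adj V E C X"
    using u_in v_in v'_notin v'_EPN unfolding mem_EPN_iff[OF graph v_in]
    by (intro IR_adjI[OF IR_sets(3) IR_set_X, of v'])
      (auto simp: C_def simple_graph_sym[OF graph])
  moreover have "\<not> IR_adj V E X B"
    using IR_adj_new_vertex_unique[of V E X B u' v'] u'_notin v'_notin u'_neq_v'
    by (auto simp: B_def)
  moreover have "\<not> IR_adj V E A C"
  proof -
    have "u \<in> C - A" "v' \<in> C - A" "u \<noteq> v'"
      using u_in v_in u'_notin v'_notin u_neq_v u'_neq_v' by (auto simp: A_def C_def)
    then show ?thesis using IR_adj_new_vertex_unique by metis
  qed
  moreover have "distinct [X, A, B, C]"
  proof -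
    have "u' \<in> A" "u' \<in> B" "u' \<notin> C" "v' \<in> B" "v' \<notin> A" "v' \<in> C"
      using u_in v_in u'_notin v'_notin u'_neq_v' by (auto simp: A_def B_def C_def)
    then show ?thesis using u'_notin v'_notin by auto
  qed
  ultimately show ?thesis
    unfolding on_induced_C4_IR_def by blast
qed

end

lemma single_induced_edge:
  assumes "card (induced_edges E X) = 1"
  obtains x y where "x \<in> X" "y \<in> X" "E x y"
    and "\<And>w z. w \<in> X \<Longrightarrow> z \<in> X \<Longrightarrow> E w z \<Longrightarrow> {w, z} = {x, y}"
proof -
  from assms obtain e where e: "induced_edges E X = {e}"
    by (rule card_1_singletonE)
  then have "e \<in> induced_edges E X" by simp
  then obtain x y where xy: "x \<in> X" "y \<in> X" "E x y" "e = {x, y}"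
    unfolding induced_edges_def by auto
  show thesis
  proof (rule that[OF xy(1-3)])
    fix w z assume "w \<in> X" "z \<in> X" "E w z"
    then have "{w, z} \<in> induced_edges E X"
      unfolding induced_edges_def by auto
    then show "{w, z} = {x, y}"
      using e xy(4) by simp
  qed
qed

theorem corollary4p3:
  fixes V :: "'a set" and E :: "'a \<Rightarrow> 'a \<Rightarrow> bool" and X :: "'a set"
  assumes "simple_graph V E"
    and "IR_graph_connected V E"
    and "IR_set V E X"
    and "card (induced_edges E X) = 1 \<or>
         (independent E X \<and> (\<exists>u\<in>X. \<exists>v\<in>X. u \<noteq> v \<and> EPN V E u X \<noteq> {} \<and> EPN V E v X \<noteq> {}))"
  shows "on_induced_C4_IR V E X"
  using assms(4)
proof
  assume "card (induced_edges E X) = 1"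
  then obtain x y where xy: "x \<in> X" "y \<in> X" "E x y"
    and edges: "\<And>w z. w \<in> X \<Longrightarrow> z \<in> X \<Longrightarrow> E w z \<Longrightarrow> {w, z} = {x, y}"
    using single_induced_edge by blast
  have "x \<noteq> y" using assms(1) xy(3) unfolding simple_graph_def by blast
  have "irredundant V E X" using assms(3) unfolding IR_set_def by blast
  then obtain x' y' where "x' \<in> EPN V E x X" "y' \<in> EPN V E y X"
    using EPN_nonempty_if_adjacent[OF assms(1)] xy simple_graph_sym[OF assms(1)]
    by (metis ex_in_conv)
  then interpret private_neighbour_swap V E X x y x' y'
    using assms(1,3) xy(1,2) \<open>x \<noteq> y\<close> edges by unfold_locales auto
  show ?thesis by (fact on_induced_C4_IR)
next
  assume "independent E X \<and> (\<exists>u\<in>X. \<exists>v\<in>X. u \<noteq> v \<and> EPN V E u X \<noteq> {} \<and> EPN V E v X \<noteq> {})"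
  then obtain u v u' v' where "independent E X" "u \<in> X" "v \<in> X" "u \<noteq> v"
    "u' \<in> EPN V E u X" "v' \<in> EPN V E v X" by blast
  then interpret private_neighbour_swap V E X u v u' v'
    using assms(1,3) by unfold_locales (auto simp: independent_def)
  show ?thesis by (fact on_induced_C4_IR)
qed

end
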